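(* Let $S=K[x_1,\ldots,x_n]$ be a polynomial ring over a field $K$, let $I\subseteq S$ be a squarefree monomial ideal all of whose minimal monomial generators have the same degree, let $x$ be one of the variables, and let $s$ be a positive integer. If $I^s$ has linear quotients, then $(I^x)^s$ has linear quotients.
   Context: A monomial ideal $J$ generated in a single degree, with minimal monomial generators $u_1,\ldots,u_r$, has linear quotients if there is an ordering $u_1>\cdots>u_r$ of these generators such that for each $1\le i<r$ the colon ideal $(u_1,\ldots,u_i):u_{i+1}$ is generated by a subset of the variables. Duplicate ideal: let $m_1,\ldots,m_q$ be all minimal monomial generators of $I$ divisible by $x$, and let $y$ be a new variable (adjoined to the ring) not dividing any generator of $I$. The duplicate ideal of $I$ by $x$ is $I^x=I+\big(\tfrac{m_1}{x}y,\ldots,\tfrac{m_q}{x}y\big)$; if $x$ divides no generator of $I$, then $I^x=I$. *)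

theory Defs
  imports "HOL-Library.Multiset"
begin

text \<open>Monomials in variables of type 'v are multisets of variables (count = exponent).
  Divisibility is multiset inclusion, product is multiset sum, degree is size.
  A monomial ideal of K[variables] is identified with the set of monomials it contains.\<close>

type_synonym 'v monomial = "'v multiset"

definition mideal :: "'v monomial set \<Rightarrow> 'v monomial set" where
  "mideal G = {m. \<exists>g\<in>G. g \<subseteq># m}"

definition is_monomial_ideal :: "'v monomial set \<Rightarrow> bool" where
  "is_monomial_ideal J \<longleftrightarrow> (\<exists>G. finite G \<and> J = mideal G)"

definition mingens :: "'v monomial set \<Rightarrow> 'v monomial set" where
  "mingens J = {u\<in>J. \<forall>v\<in>J. v \<subseteq># u \<longrightarrow> v = u}"

definition mvar :: "'v \<Rightarrow> 'v monomial" where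
  "mvar v = {#v#}"

definition colon :: "'v monomial set \<Rightarrow> 'v monomial \<Rightarrow> 'v monomial set" where
  "colon J u = {m. m + u \<in> J}"

definition mpow :: "'v monomial set \<Rightarrow> nat \<Rightarrow> 'v monomial set" where
  "mpow J s = mideal {sum_list us | us. length us = s \<and> set us \<subseteq> J}"

definition squarefree_mideal :: "'v monomial set \<Rightarrow> bool" where
  "squarefree_mideal J \<longleftrightarrow> (\<forall>u\<in>mingens J. \<forall>v. count u v \<le> 1)"

definition equigenerated :: "'v monomial set \<Rightarrow> bool" where
  "equigenerated J \<longleftrightarrow> (\<exists>d. \<forall>u\<in>mingens J. size u = d)"

definition linear_quotients :: "'v monomial set \<Rightarrow> bool" where
  "linear_quotients J \<longleftrightarrow>
     (\<exists>us. distinct us \<and> set us = mingens J \<and>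
        (\<forall>i. 0 < i \<and> i < length us \<longrightarrow>
           (\<exists>T. colon (mideal (set (take i us))) (us ! i) = mideal (mvar ` T))))"

definition duplicate :: "'v monomial set \<Rightarrow> 'v \<Rightarrow> 'v \<Rightarrow> 'v monomial set" where
  "duplicate J x y = mideal (mingens J \<union> {u - {#x#} + {#y#} | u. u \<in> mingens J \<and> x \<in># u})"

end

theory Submission imports Defs begin

text \<open>Let \<open>\<phi> = merge_var x y\<close> be the substitution \<open>y \<mapsto> x\<close>. Since the minimal generators of \<open>I\<close> are
  squarefree and free of \<open>y\<close>, the generators of \<open>I\<^sup>x\<close> are exactly the \<open>\<phi>\<close>-preimages of
  those of \<open>I\<close>; as \<open>\<phi>\<close> is multiplicative, \<open>(I\<^sup>x)\<^sup>s = \<phi>\<inverse>(I\<^sup>s)\<close>, and the minimal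
  generators of \<open>(I\<^sup>x)\<^sup>s\<close> are the preimages \<open>lift x y v k = v (y/x)\<^sup>k\<close>, \<open>0 \<le> k \<le> deg\<^sub>x v\<close>, of the minimal
  generators \<open>v\<close> of \<open>I\<^sup>s\<close>. List them block by block along a linear quotient order of
  \<open>I\<^sup>s\<close>, by increasing \<open>k\<close> inside a block. Against the earlier blocks the colon ideal is
  \<open>\<phi>\<inverse>\<close> of the old colon ideal, generated by the old variables together with \<open>y\<close> if \<open>x\<close> was
  among them; inside a block the earlier elements contribute exactly \<open>x\<close>.\<close>

lemma subset_mideal: "H \<subseteq> mideal H"
  by (auto simp: mideal_def)

lemma mideal_eqI: "A \<subseteq> mideal B \<Longrightarrow> B \<subseteq> mideal A \<Longrightarrow> mideal A = mideal B"
  unfolding mideal_def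
  by (auto intro: subset_mset.order_trans) (blast intro: subset_mset.order_trans)+

lemma mideal_Un: "mideal (A \<union> B) = mideal A \<union> mideal B"
  by (auto simp: mideal_def)

lemma mideal_mvar: "mideal (mvar ` T) = {q. \<exists>c\<in>T. c \<in># q}"
  by (auto simp: mideal_def mvar_def)

lemma colon_Un: "colon (A \<union> B) u = colon A u \<union> colon B u"
  by (auto simp: colon_def)

lemma mingens_below:
  assumes "q \<in> mideal H" shows "\<exists>m\<in>mingens (mideal H). m \<subseteq># q"
proof -
  obtain m where m: "m \<in> mideal H \<and> m \<subseteq># q" and
    least: "\<forall>v. v \<in> mideal H \<and> v \<subseteq># q \<longrightarrow> size m \<le> size v"
    using ex_has_least_nat[of "\<lambda>m. m \<in> mideal H \<and> m \<subseteq># q" q size] assms by auto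
  have "m \<in> mingens (mideal H)"
    unfolding mingens_def
  proof (intro CollectI conjI ballI impI)
    show "m \<in> mideal H" using m by simp
    fix v assume v: "v \<in> mideal H" "v \<subseteq># m"
    then have "size m \<le> size v" using least m by (meson subset_mset.order_trans)
    then show "v = m" using v(2) mset_subset_size[of v m] by (auto simp: subset_mset.le_less)
  qed
  then show ?thesis using m by blast
qed

lemma mingens_mideal_subset: "mingens (mideal H) \<subseteq> H"
proof
  fix u assume u: "u \<in> mingens (mideal H)"
  then obtain g where "g \<in> H" "g \<subseteq># u" by (auto simp: mingens_def mideal_def)
  moreover from this have "g = u" using u subset_mideal[of H] by (auto simp: mingens_def)
  ultimately show "u \<in> H" by simp
qed

lemma mideal_mingens: "mideal (mingens (mideal H)) = mideal H"
proof (rule mideal_eqI)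
  show "mingens (mideal H) \<subseteq> mideal H" by (auto simp: mingens_def)
  show "H \<subseteq> mideal (mingens (mideal H))"
    using mingens_below subset_mideal[of H] by (fastforce simp: mideal_def)
qed

lemma mingens_mideal_antichain:
  assumes "\<forall>a\<in>H. \<forall>b\<in>H. a \<subseteq># b \<longrightarrow> a = b"
  shows "mingens (mideal H) = H"
proof
  show "mingens (mideal H) \<subseteq> H" by (rule mingens_mideal_subset)
  show "H \<subseteq> mingens (mideal H)"
  proof
    fix h assume h: "h \<in> H"
    show "h \<in> mingens (mideal H)" unfolding mingens_def
    proof (intro CollectI conjI ballI impI)
      show "h \<in> mideal H" using h subset_mideal by blast
      fix v assume v: "v \<in> mideal H" "v \<subseteq># h"
      then obtain g where "g \<in> H" "g \<subseteq># v" by (auto simp: mideal_def)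
      then have "g = h" using assms h v(2) by (meson subset_mset.order_trans)
      then show "v = h" using v(2) \<open>g \<subseteq># v\<close> by simp
    qed
  qed
qed

definition prods :: "'v monomial set \<Rightarrow> nat \<Rightarrow> 'v monomial set" where
  "prods H s = {sum_list us | us. length us = s \<and> set us \<subseteq> H}"

lemma mpow_eq_mideal_prods: "mpow J s = mideal (prods J s)"
  by (simp add: mpow_def prods_def)

lemma mideal_prods_mideal: "mideal (prods (mideal D) s) = mideal (prods D s)"
proof (rule mideal_eqI)
  have "set vs \<subseteq> mideal D \<Longrightarrow>
      \<exists>ds. length ds = length vs \<and> set ds \<subseteq> D \<and> sum_list ds \<subseteq># sum_list vs" for vs
  proof (induction vs)
    case (Cons v vs)
    then obtain ds where "length ds = length vs" "set ds \<subseteq> D" "sum_list ds \<subseteq># sum_list vs" by auto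
    moreover obtain d where "d \<in> D" "d \<subseteq># v" using Cons.prems by (auto simp: mideal_def)
    ultimately show ?case by (intro exI[of _ "d # ds"]) (auto intro: subset_mset.add_mono)
  qed simp
  then show "prods (mideal D) s \<subseteq> mideal (prods D s)"
    by (fastforce simp: prods_def mideal_def)
  have "prods D s \<subseteq> prods (mideal D) s"
    using subset_mideal[of D] by (auto simp: prods_def)
  then show "prods D s \<subseteq> mideal (prods (mideal D) s)"
    using subset_mideal by blast
qed

section \<open>Identifying \<open>y\<close> with \<open>x\<close>\<close>

definition merge_var :: "'v \<Rightarrow> 'v \<Rightarrow> 'v monomial \<Rightarrow> 'v monomial" where
  "merge_var x y w = image_mset (\<lambda>z. if z = y then x else z) w"

definition avoids_var :: "'v \<Rightarrow> 'v monomial set \<Rightarrow> bool" where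
  "avoids_var y H \<longleftrightarrow> (\<forall>g\<in>H. y \<notin># g)"

lemma count_merge_var: "x \<noteq> y \<Longrightarrow> count (merge_var x y w) z =
   (if z = x then count w x + count w y else if z = y then 0 else count w z)"
  by (induction w) (auto simp: merge_var_def)

lemma merge_var_plus: "merge_var x y (a + b) = merge_var x y a + merge_var x y b"
  by (simp add: merge_var_def)

lemma merge_var_mono: "a \<subseteq># b \<Longrightarrow> merge_var x y a \<subseteq># merge_var x y b"
  by (simp add: merge_var_def image_mset_subseteq_mono)

lemma merge_var_ident: "x \<noteq> y \<Longrightarrow> y \<notin># a \<Longrightarrow> merge_var x y a = a"
  by (auto simp: multiset_eq_iff count_merge_var not_in_iff)

lemma size_merge_var: "size (merge_var x y w) = size w"
  by (simp add: merge_var_def)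

lemma merge_var_sum_list: "merge_var x y (sum_list ws) = sum_list (map (merge_var x y) ws)"
  by (induction ws) (auto simp: merge_var_plus merge_var_def)

lemma subseteq_merge_varE:
  assumes xy: "x \<noteq> y" and ay: "y \<notin># a" and sub: "a \<subseteq># merge_var x y q"
  obtains q1 where "q1 \<subseteq># q" "merge_var x y q1 = a"
proof -
  define k where "k = min (count q x) (count a x)"
  \<comment> \<open>take the \<open>x\<close>'s of \<open>a\<close> from the \<open>x\<close>'s of \<open>q\<close> as far as possible, the rest from its \<open>y\<close>'s\<close>
  define q1 where "q1 = filter_mset (\<lambda>z. z \<noteq> x \<and> z \<noteq> y) a + replicate_mset k x
     + replicate_mset (count a x - k) y"
  have le: "count a z \<le> count (merge_var x y q) z" for z
    using sub by (simp add: subseteq_mset_def)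
  have "count a y = 0" using ay by (simp add: not_in_iff)
  then have "merge_var x y q1 = a"
    using xy by (auto simp: multiset_eq_iff q1_def k_def count_merge_var)
  moreover have "count q1 z \<le> count q z" for z
    using le[of x] le[of z] xy by (auto simp: q1_def k_def count_merge_var)
  then have "q1 \<subseteq># q" by (simp add: subseteq_mset_def)
  ultimately show ?thesis using that by blast
qed

lemma merge_var_eq_sum_list_split:
  assumes xy: "x \<noteq> y" and "avoids_var y (set vs)" and "merge_var x y q = sum_list vs"
  shows "\<exists>ws. map (merge_var x y) ws = vs \<and> sum_list ws = q"
  using assms(2,3)
proof (induction vs arbitrary: q)
  case Nil
  then show ?case by (auto simp: merge_var_def)
next
  case (Cons v vs)
  then have "v \<subseteq># merge_var x y q" "y \<notin># v" by (auto simp: avoids_var_def)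
  then obtain q1 where q1: "q1 \<subseteq># q" "merge_var x y q1 = v"
    using subseteq_merge_varE[OF xy] by metis
  have "merge_var x y (q - q1) = sum_list vs"
    using Cons.prems q1
    by (metis add_left_imp_eq merge_var_plus subset_mset.add_diff_inverse sum_list.Cons)
  then obtain ws where "map (merge_var x y) ws = vs" "sum_list ws = q - q1"
    using Cons by (auto simp: avoids_var_def)
  then show ?case using q1 by (intro exI[of _ "q1 # ws"]) auto
qed

lemma avoids_var_prods: "avoids_var y H \<Longrightarrow> avoids_var y (prods H s)"
proof -
  have "set vs \<subseteq> H \<Longrightarrow> y \<notin># sum_list vs" if "avoids_var y H" for vs
    using that by (induction vs) (auto simp: avoids_var_def)
  then show "avoids_var y H \<Longrightarrow> avoids_var y (prods H s)"
    by (auto simp: avoids_var_def prods_def)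
qed

lemma mideal_vimage_merge_var:
  assumes xy: "x \<noteq> y" and "avoids_var y G"
  shows "mideal (merge_var x y -` G) = merge_var x y -` mideal G"
proof
  show "mideal (merge_var x y -` G) \<subseteq> merge_var x y -` mideal G"
    by (auto simp: mideal_def intro: merge_var_mono)
next
  show "merge_var x y -` mideal G \<subseteq> mideal (merge_var x y -` G)"
  proof
    fix q assume "q \<in> merge_var x y -` mideal G"
    then obtain g where g: "g \<in> G" "g \<subseteq># merge_var x y q" by (auto simp: mideal_def)
    with assms obtain q1 where "q1 \<subseteq># q" "merge_var x y q1 = g"
      using subseteq_merge_varE by (metis avoids_var_def)
    then show "q \<in> mideal (merge_var x y -` G)" using g by (auto simp: mideal_def)
  qed
qed

lemma mingens_vimage_merge_var:
  assumes xy: "x \<noteq> y" and yf: "avoids_var y (mingens (mideal G))"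
  shows "mingens (merge_var x y -` mideal G) = merge_var x y -` mingens (mideal G)"
proof -
  let ?M = "mingens (mideal G)"
  have "merge_var x y -` mideal G = mideal (merge_var x y -` ?M)"
    using mideal_vimage_merge_var[OF xy yf] by (simp add: mideal_mingens)
  moreover have "a = b" if "a \<in> merge_var x y -` ?M" "b \<in> merge_var x y -` ?M" "a \<subseteq># b" for a b
  proof -
    have "merge_var x y a = merge_var x y b"
      using that merge_var_mono[OF that(3)] by (auto simp: mingens_def)
    then have "size a = size b" by (metis size_merge_var)
    then show "a = b" using that(3) by (metis mset_subset_size subset_mset.le_less nat_less_le)
  qed
  ultimately show ?thesis using mingens_mideal_antichain by metis
qed

lemma prods_vimage_merge_var:
  assumes xy: "x \<noteq> y" and yf: "avoids_var y G"
  shows "prods (merge_var x y -` G) s = merge_var x y -` prods G s"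
proof
  show "prods (merge_var x y -` G) s \<subseteq> merge_var x y -` prods G s"
  proof
    fix q assume "q \<in> prods (merge_var x y -` G) s"
    then obtain ws where "q = sum_list ws" "length ws = s" "set ws \<subseteq> merge_var x y -` G"
      by (auto simp: prods_def)
    then show "q \<in> merge_var x y -` prods G s"
      by (auto simp: prods_def merge_var_sum_list intro!: exI[of _ "map (merge_var x y) ws"])
  qed
next
  show "merge_var x y -` prods G s \<subseteq> prods (merge_var x y -` G) s"
  proof
    fix q assume "q \<in> merge_var x y -` prods G s"
    then obtain vs where vs: "merge_var x y q = sum_list vs" "length vs = s" "set vs \<subseteq> G"
      by (auto simp: prods_def)
    then have "avoids_var y (set vs)" using yf by (auto simp: avoids_var_def)
    then obtain ws where ws: "map (merge_var x y) ws = vs" "sum_list ws = q"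
      using merge_var_eq_sum_list_split[OF xy] vs by blast
    then have "set ws \<subseteq> merge_var x y -` G" using vs(3) by (auto simp: image_subset_iff)
    then show "q \<in> prods (merge_var x y -` G) s" using ws vs by (auto simp: prods_def)
  qed
qed

lemma colon_vimage_merge_var:
  assumes xy: "x \<noteq> y" and yf: "avoids_var y H" and w: "merge_var x y w = v"
    and T: "colon (mideal H) v = mideal (mvar ` T)"
  shows "colon (mideal (merge_var x y -` H)) w =
    mideal (mvar ` (T - {y} \<union> (if x \<in> T then {y} else {})))"
proof -
  have "c \<in># merge_var x y q \<longleftrightarrow> c \<noteq> y \<and> c \<in># q \<or> c = x \<and> y \<in># q" for c q
    using xy by (auto simp: count_merge_var simp flip: count_greater_zero_iff)
  then have "(\<exists>c\<in>T. c \<in># merge_var x y q) \<longleftrightarrow>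
      (\<exists>c\<in>T - {y} \<union> (if x \<in> T then {y} else {}). c \<in># q)" for q
    by auto
  moreover have "colon (mideal (merge_var x y -` H)) w = {q. merge_var x y q \<in> colon (mideal H) v}"
    using w by (auto simp: mideal_vimage_merge_var[OF xy yf] colon_def merge_var_plus)
  ultimately show ?thesis unfolding T mideal_mvar by simp
qed

section \<open>The duplicate ideal and its powers\<close>

lemma mideal_duplicate:
  assumes xy: "x \<noteq> y" and yf: "avoids_var y G" and sq: "\<forall>u\<in>G. \<forall>v. count u v \<le> 1"
  shows "mideal (G \<union> {u - {#x#} + {#y#} | u. u \<in> G \<and> x \<in># u}) = mideal (merge_var x y -` G)"
proof -
  have "w \<in> merge_var x y -` G" if "w \<in> G \<union> {u - {#x#} + {#y#} | u. u \<in> G \<and> x \<in># u}" for w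
  proof -
    from that consider "w \<in> G" | u where "w = u - {#x#} + {#y#}" "u \<in> G" "x \<in># u" by blast
    then show ?thesis
    proof cases
      case 1 then show ?thesis using merge_var_ident[OF xy] yf by (auto simp: avoids_var_def)
    next
      case 2
      then have "count u y = 0" using yf by (auto simp: avoids_var_def not_in_iff)
      then have "merge_var x y w = u" using 2 xy by (auto simp: multiset_eq_iff count_merge_var)
      then show ?thesis using 2 by simp
    qed
  qed
  moreover have "w \<in> G \<union> {u - {#x#} + {#y#} | u. u \<in> G \<and> x \<in># u}"
    if w: "w \<in> merge_var x y -` G" for w
  proof (cases "y \<in># w")
    case False then show ?thesis using w merge_var_ident[OF xy] by auto
  next
    case True
    have "count w x + count w y \<le> 1" using sq w xy by (metis count_merge_var vimageD)
    moreover have "count w y > 0" using True by simp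
    ultimately have "count w y = 1" "count w x = 0" by arith+
    then have "w = merge_var x y w - {#x#} + {#y#}" "x \<in># merge_var x y w"
      using xy by (auto simp: multiset_eq_iff count_merge_var simp flip: count_greater_zero_iff)
    then show ?thesis using w by blast
  qed
  ultimately have "G \<union> {u - {#x#} + {#y#} | u. u \<in> G \<and> x \<in># u} = merge_var x y -` G"
    by blast
  then show ?thesis by simp
qed

lemma mpow_duplicate:
  assumes "is_monomial_ideal I" and "squarefree_mideal I" and xy: "x \<noteq> y"
    and yf: "avoids_var y (mingens I)"
  shows "mpow (duplicate I x y) s = merge_var x y -` mpow I s"
    and "avoids_var y (mingens (mpow I s))"
proof -
  let ?G = "mingens I"
  have I: "I = mideal ?G" using assms(1) by (auto simp: is_monomial_ideal_def mideal_mingens)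
  have yfp: "avoids_var y (prods ?G s)" using yf by (rule avoids_var_prods)
  have "mpow (mideal ?G) s = mideal (prods ?G s)"
    by (simp add: mpow_eq_mideal_prods mideal_prods_mideal)
  then have powI: "mpow I s = mideal (prods ?G s)" by (simp only: I[symmetric])
  have "duplicate I x y = mideal (merge_var x y -` ?G)"
    using mideal_duplicate[OF xy yf] assms(2) by (simp add: duplicate_def squarefree_mideal_def)
  then have "mpow (duplicate I x y) s = mideal (prods (merge_var x y -` ?G) s)"
    by (simp add: mpow_eq_mideal_prods mideal_prods_mideal)
  also have "\<dots> = merge_var x y -` mideal (prods ?G s)"
    by (simp only: prods_vimage_merge_var[OF xy yf] mideal_vimage_merge_var[OF xy yfp])
  finally show "mpow (duplicate I x y) s = merge_var x y -` mpow I s"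
    by (simp only: powI)
  show "avoids_var y (mingens (mpow I s))"
    using yfp mingens_mideal_subset powI by (metis avoids_var_def subsetD)
qed

section \<open>Linear quotients\<close>

definition linear_quotient_list :: "'v monomial list \<Rightarrow> bool" where
  "linear_quotient_list us \<longleftrightarrow> (\<forall>i. 0 < i \<and> i < length us \<longrightarrow>
     (\<exists>T. colon (mideal (set (take i us))) (us ! i) = mideal (mvar ` T)))"

lemma linear_quotients_iff:
  "linear_quotients J \<longleftrightarrow> (\<exists>us. distinct us \<and> set us = mingens J \<and> linear_quotient_list us)"
  by (simp add: linear_quotients_def linear_quotient_list_def)

lemma linear_quotient_list_Nil: "linear_quotient_list []"
  by (simp add: linear_quotient_list_def)

lemma linear_quotient_list_snoc: "linear_quotient_list (us @ [u]) \<longleftrightarrow> linear_quotient_list us \<and>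
   (us \<noteq> [] \<longrightarrow> (\<exists>T. colon (mideal (set us)) u = mideal (mvar ` T)))"
  unfolding linear_quotient_list_def
proof (intro iffI conjI allI impI)
  fix i assume "\<forall>i. 0 < i \<and> i < length (us @ [u]) \<longrightarrow>
      (\<exists>T. colon (mideal (set (take i (us @ [u])))) ((us @ [u]) ! i) = mideal (mvar ` T))"
  note h = this[rule_format]
  show "\<exists>T. colon (mideal (set (take i us))) (us ! i) = mideal (mvar ` T)"
    if "0 < i \<and> i < length us"
    using h[of i] that by (simp add: nth_append)
  show "\<exists>T. colon (mideal (set us)) u = mideal (mvar ` T)" if "us \<noteq> []"
    using h[of "length us"] that by simp
next
  fix i assume h: "(\<forall>i. 0 < i \<and> i < length us \<longrightarrow>
      (\<exists>T. colon (mideal (set (take i us))) (us ! i) = mideal (mvar ` T))) \<and>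
    (us \<noteq> [] \<longrightarrow> (\<exists>T. colon (mideal (set us)) u = mideal (mvar ` T)))"
    and i: "0 < i \<and> i < length (us @ [u])"
  then consider "i < length us" | "i = length us" by fastforce
  then show "\<exists>T. colon (mideal (set (take i (us @ [u])))) ((us @ [u]) ! i) = mideal (mvar ` T)"
    by cases (use h i in \<open>auto simp: nth_append\<close>)
qed

definition lift :: "'v \<Rightarrow> 'v \<Rightarrow> 'v monomial \<Rightarrow> nat \<Rightarrow> 'v monomial" where
  "lift x y v k = v - replicate_mset k x + replicate_mset k y"

definition fiber :: "'v \<Rightarrow> 'v \<Rightarrow> 'v monomial \<Rightarrow> 'v monomial list" where
  "fiber x y v = map (lift x y v) [0..<Suc (count v x)]"

lemma count_lift: "x \<noteq> y \<Longrightarrow> count (lift x y v k) z =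
  (if z = x then count v x - k else if z = y then count v y + k else count v z)"
  by (auto simp: lift_def)

lemma merge_var_lift: "x \<noteq> y \<Longrightarrow> y \<notin># v \<Longrightarrow> k \<le> count v x \<Longrightarrow> merge_var x y (lift x y v k) = v"
  by (auto simp: multiset_eq_iff count_merge_var count_lift not_in_iff)

lemma set_fiber:
  assumes xy: "x \<noteq> y" and vy: "y \<notin># v"
  shows "set (fiber x y v) = merge_var x y -` {v}"
proof -
  have "w \<in> set (fiber x y v)" if "merge_var x y w = v" for w
  proof -
    have c: "count (merge_var x y w) z = count v z" for z using that by simp
    have cx: "count w x + count w y = count v x" using c[of x] xy by (simp add: count_merge_var)
    have cz: "count w z = count v z" if "z \<noteq> x" "z \<noteq> y" for z
      using c[of z] that xy by (simp add: count_merge_var)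
    have "count v y = 0" using vy by (simp add: not_in_iff)
    then have "count w z = count (lift x y v (count w y)) z" for z
      using cx cz[of z] xy by (auto simp: count_lift)
    then have "w = lift x y v (count w y)" by (rule multiset_eqI)
    moreover have "count w y \<in> set [0..<Suc (count v x)]"
      using cx by (simp only: set_upt atLeastLessThan_iff) linarith
    ultimately show ?thesis unfolding fiber_def set_map by (rule image_eqI)
  qed
  then show ?thesis using merge_var_lift[OF xy vy] by (auto simp: fiber_def simp del: upt_Suc)
qed

lemma distinct_fiber:
  assumes "x \<noteq> y" shows "distinct (fiber x y v)"
proof -
  have "inj (lift x y v)"
  proof
    fix a b assume "lift x y v a = lift x y v b"
    then have "count (lift x y v a) y = count (lift x y v b) y" by simp
    then show "a = b" using assms by (simp add: count_lift)
  qed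
  then have "inj_on (lift x y v) {0..<Suc (count v x)}" by (rule inj_on_subset) simp
  then show ?thesis by (simp add: fiber_def distinct_map del: upt_Suc)
qed

lemma set_concat_fiber:
  "x \<noteq> y \<Longrightarrow> avoids_var y (set us) \<Longrightarrow>
    set (concat (map (fiber x y) us)) = merge_var x y -` set us"
  by (induction us) (auto simp: set_fiber avoids_var_def)

lemma distinct_concat_fiber:
  assumes xy: "x \<noteq> y"
  shows "avoids_var y (set us) \<Longrightarrow> distinct us \<Longrightarrow> distinct (concat (map (fiber x y) us))"
proof (induction us)
  case (Cons v us)
  then have "set (fiber x y v) \<inter> set (concat (map (fiber x y) us)) = {}"
    using set_concat_fiber[OF xy, of us] set_fiber[OF xy, of v] by (auto simp: avoids_var_def)
  then show ?case using Cons distinct_fiber[OF xy] by (simp add: avoids_var_def)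
qed simp

lemma colon_lift_prefix:
  assumes xy: "x \<noteq> y" and m: "m \<le> count v x"
  shows "colon (mideal (lift x y v ` {0..<m})) (lift x y v m) =
    mideal (mvar ` (if 0 < m then {x} else {}))"
proof -
  have "q \<in> colon (mideal (lift x y v ` {0..<m})) (lift x y v m) \<longleftrightarrow> 0 < m \<and> x \<in># q" for q
  proof
    assume "q \<in> colon (mideal (lift x y v ` {0..<m})) (lift x y v m)"
    then obtain l where l: "l < m" "lift x y v l \<subseteq># q + lift x y v m"
      by (auto simp: colon_def mideal_def)
    then have "count (lift x y v l) x \<le> count (q + lift x y v m) x"
      by (simp add: subseteq_mset_def)
    then have "count v x - l \<le> count q x + (count v x - m)" using xy by (simp add: count_lift)
    then have "0 < count q x" using l(1) m by linarith
    then show "0 < m \<and> x \<in># q" using l(1) by simp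
  next
    assume q: "0 < m \<and> x \<in># q"
    \<comment> \<open>the previous element \<open>lift x y v (m - 1)\<close> already divides \<open>x \<cdot> lift x y v m\<close>\<close>
    have "count (lift x y v (m - 1)) z \<le> count (q + lift x y v m) z" for z
    proof (cases "z = x")
      case True
      have "0 < count q x" using q by simp
      then have "count v x - (m - 1) \<le> count q x + (count v x - m)" using q m by linarith
      then show ?thesis using True xy by (simp add: count_lift)
    qed (use xy in \<open>auto simp: count_lift\<close>)
    then have "lift x y v (m - 1) \<subseteq># q + lift x y v m" by (simp add: subseteq_mset_def)
    moreover have "m - 1 \<in> {0..<m}" using q by simp
    ultimately show "q \<in> colon (mideal (lift x y v ` {0..<m})) (lift x y v m)"
      by (auto simp: colon_def mideal_def)
  qed
  then show ?thesis unfolding mideal_mvar by auto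
qed

lemma linear_quotient_list_append_fiber:
  assumes xy: "x \<noteq> y" and yf: "avoids_var y (set us)" and vy: "y \<notin># v"
    and A: "linear_quotient_list A" "set A = merge_var x y -` set us"
    and T: "colon (mideal (set us)) v = mideal (mvar ` T)"
  shows "m \<le> Suc (count v x) \<Longrightarrow> linear_quotient_list (A @ map (lift x y v) [0..<m])"
proof (induction m)
  case 0 then show ?case using A by simp
next
  case (Suc m)
  then have m: "m \<le> count v x" by simp
  let ?prefix = "A @ map (lift x y v) [0..<m]"
  have "colon (mideal (set ?prefix)) (lift x y v m) =
      colon (mideal (merge_var x y -` set us)) (lift x y v m) \<union>
      colon (mideal (lift x y v ` {0..<m})) (lift x y v m)"
    by (simp add: A(2) mideal_Un colon_Un)
  also have "\<dots> = mideal (mvar ` (T - {y} \<union> (if x \<in> T then {y} else {}))) \<union>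
      mideal (mvar ` (if 0 < m then {x} else {}))"
    by (simp only: colon_vimage_merge_var[OF xy yf merge_var_lift[OF xy vy m] T]
        colon_lift_prefix[OF xy m])
  also have "\<dots> = mideal (mvar ` (T - {y} \<union> (if x \<in> T then {y} else {}) \<union>
      (if 0 < m then {x} else {})))"
    by (simp only: image_Un mideal_Un)
  finally have "\<exists>C. colon (mideal (set ?prefix)) (lift x y v m) = mideal (mvar ` C)"
    by blast
  moreover have "linear_quotient_list ?prefix" using Suc.IH m by simp
  moreover have "A @ map (lift x y v) [0..<Suc m] = ?prefix @ [lift x y v m]"
    by simp
  ultimately show ?case by (simp only: linear_quotient_list_snoc) blast
qed

lemma linear_quotient_list_concat_fiber:
  assumes xy: "x \<noteq> y"
  shows "linear_quotient_list us \<Longrightarrow> avoids_var y (set us) \<Longrightarrow>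
    linear_quotient_list (concat (map (fiber x y) us))"
proof (induction us rule: rev_induct)
  case Nil then show ?case by (simp add: linear_quotient_list_Nil)
next
  case (snoc v us)
  then have yf: "avoids_var y (set us)" and vy: "y \<notin># v" by (auto simp: avoids_var_def)
  obtain T where T: "colon (mideal (set us)) v = mideal (mvar ` T)"
  proof (cases "us = []")
    case True
    then show ?thesis using that[of "{}"] by (simp add: colon_def mideal_def)
  qed (use snoc.prems linear_quotient_list_snoc that in blast)
  have "linear_quotient_list (concat (map (fiber x y) us))"
    using snoc.IH snoc.prems(1) yf by (simp add: linear_quotient_list_snoc)
  then have "linear_quotient_list
      (concat (map (fiber x y) us) @ map (lift x y v) [0..<Suc (count v x)])"
    using linear_quotient_list_append_fiber[OF xy yf vy _ set_concat_fiber[OF xy yf] T] by blast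
  moreover have "concat (map (fiber x y) (us @ [v])) =
      concat (map (fiber x y) us) @ map (lift x y v) [0..<Suc (count v x)]"
    by (simp add: fiber_def[of x y v] del: upt_Suc)
  ultimately show ?case by simp
qed

theorem proposition2p3:
  fixes I :: "'v monomial set" and x y :: 'v and s :: nat
  assumes "is_monomial_ideal I"
    and "squarefree_mideal I"
    and "equigenerated I"
    and "x \<noteq> y"
    and "\<forall>u\<in>mingens I. y \<notin># u"
    and "0 < s"
    and "linear_quotients (mpow I s)"
  shows "linear_quotients (mpow (duplicate I x y) s)"
proof -
  have yf: "avoids_var y (mingens I)" using assms(5) by (simp add: avoids_var_def)
  note pow = mpow_duplicate[OF assms(1,2,4) yf, of s]
  obtain us where us: "distinct us" "set us = mingens (mpow I s)" "linear_quotient_list us"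
    using assms(7) by (auto simp: linear_quotients_iff)
  have yus: "avoids_var y (set us)" using pow(2) us(2) by simp
  let ?ws = "concat (map (fiber x y) us)"
  have "set ?ws = mingens (mpow (duplicate I x y) s)"
    using pow set_concat_fiber[OF assms(4) yus]
    by (simp add: us(2) mpow_eq_mideal_prods mingens_vimage_merge_var[OF assms(4)])
  moreover have "distinct ?ws" using distinct_concat_fiber[OF assms(4) yus us(1)] .
  moreover have "linear_quotient_list ?ws"
    using linear_quotient_list_concat_fiber[OF assms(4) us(3) yus] .
  ultimately show ?thesis by (auto simp: linear_quotients_iff)
qed

end
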